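(* There exist absolute constants $C,C'>0$ such that the following holds. Let $\mathbf{Y},\mathbf{Z}$ be two real random variables whose supports are contained in $[-L,L]$ for some $L\ge1$, and suppose their Wasserstein distance is $W_1(\mathbf{Y},\mathbf{Z})=c>0$. Then for every integer $k\ge\lceil 2LC/c\rceil$, \[ \mathrm{Mom}_k(\mathbf{Y},\mathbf{Z})\ge\frac{c}{2C'\cdot3^k}. \]
   Context: $W_1(\mathbf{Y},\mathbf{Z})=\inf\mathbf{E}[|\mathbf{Y}'-\mathbf{Z}'|]$ over all couplings $(\mathbf{Y}',\mathbf{Z}')$ of $\mathbf{Y}$ and $\mathbf{Z}$. $\mathrm{Mom}_k(\mathbf{Y},\mathbf{Z})=\big(\sum_{i=1}^k(\mathbf{E}[\mathbf{Y}^i]-\mathbf{E}[\mathbf{Z}^i])^2\big)^{1/2}$. *)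

theory Defs
  imports "HOL-Probability.Probability"
begin

definition couplings :: "real measure \<Rightarrow> real measure \<Rightarrow> (real \<times> real) measure set" where
  "couplings \<mu> \<nu> = {\<pi>. prob_space \<pi> \<and> sets \<pi> = sets (borel \<Otimes>\<^sub>M borel)
      \<and> distr \<pi> borel fst = \<mu> \<and> distr \<pi> borel snd = \<nu>}"

text \<open>Wasserstein-1 distance (valued in ennreal, so no integrability side conditions).\<close>
definition W1 :: "real measure \<Rightarrow> real measure \<Rightarrow> ennreal" where
  "W1 \<mu> \<nu> = (INF \<pi>\<in>couplings \<mu> \<nu>. \<integral>\<^sup>+ p. ennreal \<bar>fst p - snd p\<bar> \<partial>\<pi>)"

definition Mom :: "nat \<Rightarrow> real measure \<Rightarrow> real measure \<Rightarrow> real" where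
  "Mom k \<mu> \<nu> = sqrt (\<Sum>i=1..k. ((\<integral>x. x ^ i \<partial>\<mu>) - (\<integral>x. x ^ i \<partial>\<nu>))\<^sup>2)"

end

theory Submission
  imports Defs "HOL-Computational_Algebra.Polynomial"
begin

text \<open>
  For the quantile coupling, \<open>|F\<^sub>\<mu>\<^sup>-\<^sup>1(\<omega>) - F\<^sub>\<nu>\<^sup>-\<^sup>1(\<omega>)| = G(F\<^sub>\<mu>\<^sup>-\<^sup>1(\<omega>)) - G(F\<^sub>\<nu>\<^sup>-\<^sup>1(\<omega>))\<close> pointwise, where
  \<open>G\<close> is the primitive of \<open>sgn (F\<^sub>\<nu> - F\<^sub>\<mu>)\<close>.  Hence \<open>W\<^sub>1 = c\<close> is witnessed by a 1-Lipschitz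
  \<open>G\<close> with \<open>\<integral>G d\<mu> - \<integral>G d\<nu> \<ge> c\<close>.

  Convolving \<open>G\<close> with the Jackson kernel \<open>(sin ((2r+1)x) / sin x)\<^sup>4\<close>, which is a polynomial of
  degree \<open>8r\<close> in \<open>sin x\<close>, yields a polynomial \<open>P\<close> of degree \<open>8r\<close> with \<open>|G - P| = O(L/r)\<close> on
  \<open>[-L, L]\<close> and coefficients of size \<open>O(9\<^sup>4\<^sup>r)\<close>.  For \<open>r = k div 16\<close> and \<open>k \<ge> C L / c\<close>
  the error is at most \<open>c/4\<close>, so \<open>\<integral>P d\<mu> - \<integral>P d\<nu> \<ge> c/2\<close>; this is a combination of the first
  \<open>k\<close> moment differences, each at most \<open>Mom\<^sub>k\<close>, with coefficients summing to \<open>O(3\<^sup>k)\<close>.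
\<close>

lemma lipschitz_continuous_on:
  fixes f :: "real \<Rightarrow> real"
  assumes "\<And>a b. \<bar>f a - f b\<bar> \<le> \<bar>a - b\<bar>"
  shows "continuous_on A f"
  by (rule lipschitz_on_continuous_on[where L=1]) (auto simp: lipschitz_on_def dist_real_def assms)

lemma lipschitz_abs_le:
  fixes f :: "real \<Rightarrow> real"
  assumes "\<And>a b. \<bar>f a - f b\<bar> \<le> \<bar>a - b\<bar>" and "f 0 = 0"
  shows "\<bar>f u\<bar> \<le> \<bar>u\<bar>"
  using assms(1)[of u 0] assms(2) by simp

section \<open>A Lipschitz witness for the Wasserstein distance\<close>

definition quantile :: "real measure \<Rightarrow> real \<Rightarrow> real" where
  "quantile M \<omega> = Inf {x. \<omega> \<le> cdf M x}"

abbreviation unit_interval :: "real measure" where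
  "unit_interval \<equiv> restrict_space lborel {0<..<1}"

lemma prob_space_unit_interval: "prob_space unit_interval"
  by (auto simp: space_restrict_space emeasure_restrict_space intro!: prob_spaceI)

lemma quantile_le_iff:
  assumes "real_distribution M" and "\<omega> \<in> {0<..<1}"
  shows "quantile M \<omega> \<le> x \<longleftrightarrow> \<omega> \<le> cdf M x"
proof -
  interpret cdf_distribution M by (simp add: cdf_distribution_def assms(1))
  show ?thesis
    unfolding quantile_def by (rule pseudoinverse[symmetric]) (use assms(2) in auto)
qed

lemma measurable_quantile:
  assumes "real_distribution M"
  shows "quantile M \<in> borel_measurable unit_interval"
proof -
  interpret cdf_distribution M by (simp add: cdf_distribution_def assms)
  have "sets unit_interval = sets (restrict_space borel {0<..<1})"
    by (rule sets_restrict_space_cong) simp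
  from measurable_cong_sets[OF this refl] show ?thesis
    using measurable_CI unfolding quantile_def[abs_def] by blast
qed

lemma distr_quantile:
  assumes "real_distribution M"
  shows "distr unit_interval borel (quantile M) = M"
proof -
  interpret cdf_distribution M by (simp add: cdf_distribution_def assms)
  show ?thesis
    using distr_I_eq_M unfolding quantile_def[abs_def] .
qed

lemma measurable_quantile_pair:
  assumes "real_distribution \<mu>" and "real_distribution \<nu>"
  shows "(\<lambda>\<omega>. (quantile \<mu> \<omega>, quantile \<nu> \<omega>)) \<in> unit_interval \<rightarrow>\<^sub>M borel \<Otimes>\<^sub>M borel"
  by (intro measurable_Pair measurable_quantile assms)

lemma integral_quantile:
  fixes f :: "real \<Rightarrow> real"
  assumes "real_distribution M" and "f \<in> borel_measurable borel"
  shows "(\<integral>x. f x \<partial>M) = (\<integral>\<omega>. f (quantile M \<omega>) \<partial>unit_interval)"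
  using integral_distr[OF measurable_quantile[OF assms(1)] assms(2)] distr_quantile[OF assms(1)]
  by simp

lemma integrable_quantile_iff:
  fixes f :: "real \<Rightarrow> real"
  assumes "real_distribution M" and "f \<in> borel_measurable borel"
  shows "integrable unit_interval (\<lambda>\<omega>. f (quantile M \<omega>)) \<longleftrightarrow> integrable M f"
  using integrable_distr_eq[OF measurable_quantile[OF assms(1)] assms(2)] distr_quantile[OF assms(1)]
  by simp

lemma quantile_coupling:
  assumes \<mu>: "real_distribution \<mu>" and \<nu>: "real_distribution \<nu>"
  shows "distr unit_interval (borel \<Otimes>\<^sub>M borel) (\<lambda>\<omega>. (quantile \<mu> \<omega>, quantile \<nu> \<omega>)) \<in> couplings \<mu> \<nu>"
proof -
  interpret prob_space unit_interval by (rule prob_space_unit_interval)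
  note q = measurable_quantile_pair[OF assms]
  have "distr (distr unit_interval (borel \<Otimes>\<^sub>M borel) (\<lambda>\<omega>. (quantile \<mu> \<omega>, quantile \<nu> \<omega>))) borel fst
      = distr unit_interval borel (quantile \<mu>)"
    using q by (simp add: distr_distr comp_def)
  moreover have "distr (distr unit_interval (borel \<Otimes>\<^sub>M borel) (\<lambda>\<omega>. (quantile \<mu> \<omega>, quantile \<nu> \<omega>))) borel snd
      = distr unit_interval borel (quantile \<nu>)"
    using q by (simp add: distr_distr comp_def)
  ultimately show ?thesis
    unfolding couplings_def using q
    by (simp add: distr_quantile[OF \<mu>] distr_quantile[OF \<nu>] prob_space_distr)
qed

lemma W1_le_quantile_gap:
  assumes \<mu>: "real_distribution \<mu>" and \<nu>: "real_distribution \<nu>"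
  shows "W1 \<mu> \<nu> \<le> (\<integral>\<^sup>+ \<omega>. ennreal \<bar>quantile \<mu> \<omega> - quantile \<nu> \<omega>\<bar> \<partial>unit_interval)"
proof -
  note q = measurable_quantile_pair[OF assms]
  have "W1 \<mu> \<nu> \<le> (\<integral>\<^sup>+ p. ennreal \<bar>fst p - snd p\<bar>
      \<partial>distr unit_interval (borel \<Otimes>\<^sub>M borel) (\<lambda>\<omega>. (quantile \<mu> \<omega>, quantile \<nu> \<omega>)))"
    unfolding W1_def by (rule INF_lower) (rule quantile_coupling[OF assms])
  also have "\<dots> = (\<integral>\<^sup>+ \<omega>. ennreal \<bar>quantile \<mu> \<omega> - quantile \<nu> \<omega>\<bar> \<partial>unit_interval)"
    using q by (subst nn_integral_distr) auto
  finally show ?thesis .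
qed

definition primitive :: "(real \<Rightarrow> real) \<Rightarrow> real \<Rightarrow> real" where
  "primitive f x = (\<integral>t. (indicator {..<x} t - indicator {..<0} t) * f t \<partial>lborel)"

context
  fixes f :: "real \<Rightarrow> real"
  assumes f_measurable [measurable]: "f \<in> borel_measurable borel"
    and abs_f_le_1: "\<And>t. \<bar>f t\<bar> \<le> 1"
begin

lemma integrable_mult_bounded:
  assumes [measurable]: "g \<in> borel_measurable borel" and "\<And>t. \<bar>g t\<bar> \<le> indicator {a..b} t"
  shows "integrable lborel (\<lambda>t. g t * f t)"
proof (rule Bochner_Integration.integrable_bound)
  show "integrable lborel (indicator {a..b} :: real \<Rightarrow> real)"
    by (intro integrable_real_indicator) (auto simp: emeasure_lborel_Icc_eq)
  have "\<bar>g t * f t\<bar> \<le> indicator {a..b} t" for t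
    using mult_mono[OF assms(2) abs_f_le_1, of t] by (simp add: abs_mult)
  then show "AE t in lborel. norm (g t * f t) \<le> norm (indicator {a..b} t :: real)"
    by simp
qed measurable

lemma primitive_0 [simp]: "primitive f 0 = 0"
  by (simp add: primitive_def)

lemma primitive_diff:
  assumes "a \<le> b"
  shows "primitive f b - primitive f a = (\<integral>t. indicator {a..<b} t * f t \<partial>lborel)"
proof -
  have int: "integrable lborel (\<lambda>t. (indicator {..<x} t - indicator {..<0} t) * f t)" for x
    by (rule integrable_mult_bounded[where a="min x 0" and b="max x 0"]) (auto simp: indicator_def)
  have "primitive f b - primitive f a =
      (\<integral>t. (indicator {..<b} t - indicator {..<0} t) * f t - (indicator {..<a} t - indicator {..<0} t) * f t \<partial>lborel)"
    unfolding primitive_def by (rule Bochner_Integration.integral_diff[symmetric, OF int int])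
  also have "\<dots> = (\<integral>t. indicator {a..<b} t * f t \<partial>lborel)"
    using assms by (intro Bochner_Integration.integral_cong) (auto simp: indicator_def)
  finally show ?thesis .
qed

lemma primitive_diff_const:
  assumes "a \<le> b" and "\<And>t. t \<in> {a..<b} \<Longrightarrow> f t = s"
  shows "primitive f b - primitive f a = s * (b - a)"
proof -
  have "primitive f b - primitive f a = (\<integral>t. s * indicator {a..<b} t \<partial>lborel)"
    unfolding primitive_diff[OF assms(1)] using assms(2)
    by (intro Bochner_Integration.integral_cong) (auto simp: indicator_def)
  then show ?thesis using assms(1) by simp
qed

lemma primitive_lipschitz: "\<bar>primitive f a - primitive f b\<bar> \<le> \<bar>a - b\<bar>"
proof -
  have "\<bar>primitive f y - primitive f x\<bar> \<le> y - x" if "x \<le> y" for x y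
  proof -
    have "\<bar>primitive f y - primitive f x\<bar> \<le> (\<integral>t. indicator {x..<y} t \<partial>lborel)"
      unfolding primitive_diff[OF that]
    proof (rule integral_abs_bound_integral)
      show "integrable lborel (\<lambda>t. indicator {x..<y} t * f t)"
        by (rule integrable_mult_bounded[where a=x and b=y]) (auto simp: indicator_def)
      show "integrable lborel (indicator {x..<y} :: real \<Rightarrow> real)"
        using that by (intro integrable_real_indicator) auto
      show "\<bar>indicator {x..<y} t * f t\<bar> \<le> indicator {x..<y} t" for t
        using abs_f_le_1[of t] by (simp add: indicator_def)
    qed
    then show ?thesis using that by simp
  qed
  from this[of a b] this[of b a] show ?thesis
    by (cases "a \<le> b") (auto simp: abs_minus_commute)
qed

end

lemma abs_sgn_le_1: "\<bar>sgn (x :: real)\<bar> \<le> 1"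
  by (simp add: abs_sgn_eq)

text \<open>Between the two quantiles, \<open>\<omega>\<close> separates the two cdfs, so the sign is constant there.\<close>
lemma quantile_gap_eq_primitive_diff:
  assumes \<mu>: "real_distribution \<mu>" and \<nu>: "real_distribution \<nu>" and \<omega>: "\<omega> \<in> {0<..<1}"
  defines "G \<equiv> primitive (\<lambda>t. sgn (cdf \<nu> t - cdf \<mu> t))"
  shows "\<bar>quantile \<mu> \<omega> - quantile \<nu> \<omega>\<bar> = G (quantile \<mu> \<omega>) - G (quantile \<nu> \<omega>)"
proof -
  interpret \<mu>: cdf_distribution \<mu> by (simp add: cdf_distribution_def \<mu>)
  interpret \<nu>: cdf_distribution \<nu> by (simp add: cdf_distribution_def \<nu>)
  have [measurable]: "(\<lambda>t. sgn (cdf \<nu> t - cdf \<mu> t)) \<in> borel_measurable borel"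
    by measurable
  have le_iff: "quantile M \<omega> \<le> t \<longleftrightarrow> \<omega> \<le> cdf M t" if "real_distribution M" for M t
    using quantile_le_iff[OF that \<omega>] .
  show ?thesis
  proof (cases "quantile \<nu> \<omega> \<le> quantile \<mu> \<omega>")
    case True
    have "cdf \<mu> t < cdf \<nu> t" if "t \<in> {quantile \<nu> \<omega>..<quantile \<mu> \<omega>}" for t
      using that le_iff[OF \<mu>, of t] le_iff[OF \<nu>, of t] by auto
    then have "G (quantile \<mu> \<omega>) - G (quantile \<nu> \<omega>) = 1 * (quantile \<mu> \<omega> - quantile \<nu> \<omega>)"
      unfolding G_def by (intro primitive_diff_const True abs_sgn_le_1) auto
    then show ?thesis using True by simp
  next
    case False
    have "cdf \<nu> t < cdf \<mu> t" if "t \<in> {quantile \<mu> \<omega>..<quantile \<nu> \<omega>}" for t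
      using that le_iff[OF \<mu>, of t] le_iff[OF \<nu>, of t] by auto
    then have "G (quantile \<nu> \<omega>) - G (quantile \<mu> \<omega>) = -1 * (quantile \<nu> \<omega> - quantile \<mu> \<omega>)"
      unfolding G_def using False by (intro primitive_diff_const abs_sgn_le_1) auto
    then show ?thesis using False by simp
  qed
qed

lemma W1_le_integral_diff_lipschitz:
  assumes \<mu>: "real_distribution \<mu>" and \<nu>: "real_distribution \<nu>"
    and int_\<mu>: "integrable \<mu> (\<lambda>x. x)" and int_\<nu>: "integrable \<nu> (\<lambda>x. x)"
  obtains G where "G 0 = 0" and "\<And>a b. \<bar>G a - G b\<bar> \<le> \<bar>a - b\<bar>"
    and "W1 \<mu> \<nu> \<le> ennreal ((\<integral>x. G x \<partial>\<mu>) - (\<integral>x. G x \<partial>\<nu>))"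
proof
  interpret \<mu>: cdf_distribution \<mu> by (simp add: cdf_distribution_def \<mu>)
  interpret \<nu>: cdf_distribution \<nu> by (simp add: cdf_distribution_def \<nu>)
  define G where "G = primitive (\<lambda>t. sgn (cdf \<nu> t - cdf \<mu> t))"
  have [measurable]: "(\<lambda>t. sgn (cdf \<nu> t - cdf \<mu> t)) \<in> borel_measurable borel"
    by measurable
  show "G 0 = 0"
    unfolding G_def by simp
  show lip: "\<bar>G a - G b\<bar> \<le> \<bar>a - b\<bar>" for a b
    unfolding G_def by (intro primitive_lipschitz abs_sgn_le_1) measurable
  have [measurable]: "G \<in> borel_measurable borel"
    by (intro borel_measurable_continuous_onI lipschitz_continuous_on lip)
  have int_quantile: "integrable unit_interval (\<lambda>\<omega>. G (quantile M \<omega>))"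
    if M: "real_distribution M" and "integrable M (\<lambda>x. x)" for M
  proof -
    have "G \<in> borel_measurable M"
      by (subst measurable_cong_sets[OF real_distribution.events_eq_borel[OF M] refl]) simp
    then have "integrable M G"
      by (rule Bochner_Integration.integrable_bound[OF \<open>integrable M (\<lambda>x. x)\<close>])
         (simp add: lipschitz_abs_le[OF lip \<open>G 0 = 0\<close>])
    then show ?thesis
      by (simp add: integrable_quantile_iff M)
  qed
  have gap: "\<bar>quantile \<mu> \<omega> - quantile \<nu> \<omega>\<bar> = G (quantile \<mu> \<omega>) - G (quantile \<nu> \<omega>)"
    if "\<omega> \<in> space unit_interval" for \<omega>
    using that unfolding G_def space_restrict_space by (intro quantile_gap_eq_primitive_diff \<mu> \<nu>) simp
  have "W1 \<mu> \<nu> \<le> (\<integral>\<^sup>+ \<omega>. ennreal \<bar>quantile \<mu> \<omega> - quantile \<nu> \<omega>\<bar> \<partial>unit_interval)"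
    by (rule W1_le_quantile_gap[OF \<mu> \<nu>])
  also have "\<dots> = (\<integral>\<^sup>+ \<omega>. ennreal (G (quantile \<mu> \<omega>) - G (quantile \<nu> \<omega>)) \<partial>unit_interval)"
    by (intro nn_integral_cong) (simp only: gap)
  also have "\<dots> = ennreal (\<integral>\<omega>. G (quantile \<mu> \<omega>) - G (quantile \<nu> \<omega>) \<partial>unit_interval)"
  proof (rule nn_integral_eq_integral)
    show "integrable unit_interval (\<lambda>\<omega>. G (quantile \<mu> \<omega>) - G (quantile \<nu> \<omega>))"
      by (intro Bochner_Integration.integrable_diff int_quantile \<mu> \<nu> int_\<mu> int_\<nu>)
    show "AE \<omega> in unit_interval. 0 \<le> G (quantile \<mu> \<omega>) - G (quantile \<nu> \<omega>)"
      by (intro AE_I2) (simp flip: gap)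
  qed
  also have "(\<integral>\<omega>. G (quantile \<mu> \<omega>) - G (quantile \<nu> \<omega>) \<partial>unit_interval) = (\<integral>x. G x \<partial>\<mu>) - (\<integral>x. G x \<partial>\<nu>)"
    by (simp add: integral_quantile[of _ G] \<mu> \<nu> int_quantile int_\<mu> int_\<nu>)
  finally show "W1 \<mu> \<nu> \<le> ennreal ((\<integral>x. G x \<partial>\<mu>) - (\<integral>x. G x \<partial>\<nu>))" .
qed

section \<open>Polynomials in \<open>sin x\<close>\<close>

text \<open>
  \<open>poly (sin_multiple_poly r) (sin x) = sin ((2r+1)x) / sin x\<close>; the recurrence comes from
  \<open>sin ((2r+5)x) = 2 cos (2x) sin ((2r+3)x) - sin ((2r+1)x)\<close> and \<open>cos (2x) = 1 - 2 sin\<^sup>2 x\<close>.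
  Flipping the signs in the recurrence gives a coefficientwise majorant.
\<close>
fun sin_multiple_poly :: "nat \<Rightarrow> real poly" where
  "sin_multiple_poly 0 = 1"
| "sin_multiple_poly (Suc 0) = [:3, 0, -4:]"
| "sin_multiple_poly (Suc (Suc r)) = [:2, 0, -4:] * sin_multiple_poly (Suc r) - sin_multiple_poly r"

fun sin_multiple_majorant :: "nat \<Rightarrow> real poly" where
  "sin_multiple_majorant 0 = 1"
| "sin_multiple_majorant (Suc 0) = [:3, 0, 4:]"
| "sin_multiple_majorant (Suc (Suc r)) = [:2, 0, 4:] * sin_multiple_majorant (Suc r) + sin_multiple_majorant r"

definition coeff_dominated :: "real poly \<Rightarrow> real poly \<Rightarrow> bool" where
  "coeff_dominated p q \<longleftrightarrow> (\<forall>i. \<bar>coeff p i\<bar> \<le> coeff q i)"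

lemma coeff_dominated_diff:
  "coeff_dominated p q \<Longrightarrow> coeff_dominated p' q' \<Longrightarrow> coeff_dominated (p - p') (q + q')"
  unfolding coeff_dominated_def by (auto intro: abs_triangle_ineq4[THEN order_trans] add_mono)

lemma coeff_dominated_mult:
  assumes "coeff_dominated p q" "coeff_dominated p' q'"
  shows "coeff_dominated (p * p') (q * q')"
  unfolding coeff_dominated_def
proof
  fix n
  have "\<bar>coeff (p * p') n\<bar> \<le> (\<Sum>i\<le>n. \<bar>coeff p i * coeff p' (n - i)\<bar>)"
    unfolding coeff_mult by (rule sum_abs)
  also have "\<dots> \<le> (\<Sum>i\<le>n. coeff q i * coeff q' (n - i))"
    using assms unfolding coeff_dominated_def
    by (intro sum_mono) (auto simp: abs_mult intro!: mult_mono order_trans[OF abs_ge_zero])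
  finally show "\<bar>coeff (p * p') n\<bar> \<le> coeff (q * q') n"
    unfolding coeff_mult .
qed

lemma coeff_dominated_power:
  assumes "coeff_dominated p q"
  shows "coeff_dominated (p ^ n) (q ^ n)"
proof (induction n)
  case 0
  show ?case
    by (simp add: coeff_dominated_def)
next
  case (Suc n)
  show ?case
    unfolding power_Suc by (rule coeff_dominated_mult[OF assms Suc])
qed

lemma sum_abs_coeff_le_poly_one:
  assumes "coeff_dominated p q"
  shows "(\<Sum>i\<le>D. \<bar>coeff p i\<bar>) \<le> poly q 1"
proof -
  have q_nonneg: "0 \<le> coeff q i" for i
    using assms unfolding coeff_dominated_def by (meson abs_ge_zero order_trans)
  have "(\<Sum>i\<le>D. \<bar>coeff p i\<bar>) \<le> (\<Sum>i\<le>D. coeff q i)"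
    using assms unfolding coeff_dominated_def by (intro sum_mono) auto
  also have "\<dots> \<le> (\<Sum>i\<le>max D (degree q). coeff q i)"
    by (intro sum_mono2) (auto simp: q_nonneg)
  also have "\<dots> = (\<Sum>i\<le>degree q. coeff q i)"
    by (intro sum.mono_neutral_right) (auto simp: coeff_eq_0)
  also have "\<dots> = poly q 1"
    by (simp add: poly_altdef)
  finally show ?thesis .
qed

lemma coeff_dominated_sin_multiple:
  "coeff_dominated (sin_multiple_poly r) (sin_multiple_majorant r)"
proof (induction r rule: sin_multiple_poly.induct)
  case (3 r)
  have "coeff_dominated [:2, 0, -4:] [:2, 0, 4:]"
    by (auto simp: coeff_dominated_def coeff_pCons split: nat.split)
  with 3 show ?case
    by (simp only: sin_multiple_poly.simps sin_multiple_majorant.simps)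
       (blast intro: coeff_dominated_diff coeff_dominated_mult)
qed (auto simp: coeff_dominated_def coeff_pCons split: nat.split)

lemma poly_sin_multiple_majorant_one:
  "0 \<le> poly (sin_multiple_majorant r) 1 \<and> poly (sin_multiple_majorant r) 1 \<le> 7 * 9 ^ r"
  by (induction r rule: sin_multiple_majorant.induct) (auto simp: algebra_simps)

lemma degree_sin_multiple_poly: "degree (sin_multiple_poly r) \<le> 2 * r"
proof (induction r rule: sin_multiple_poly.induct)
  case (3 r)
  have "degree ([:2, 0, -4:] * sin_multiple_poly (Suc r)) \<le> 2 + 2 * Suc r"
    by (rule order_trans[OF degree_mult_le]) (use 3 in auto)
  with 3 show ?case
    by (auto intro: order_trans[OF degree_diff_le])
qed (auto simp: degree_pCons_eq_if)

lemma poly_sin_multiple_poly_sin: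
  "poly (sin_multiple_poly r) (sin x) * sin x = sin (real (2 * r + 1) * x)"
proof (induction r rule: sin_multiple_poly.induct)
  case 2
  have "sin (3 * x) = sin (2 * x + x)"
    by simp
  also have "\<dots> = 2 * sin x * (cos x)\<^sup>2 + (1 - 2 * (sin x)\<^sup>2) * sin x"
    unfolding sin_add sin_double cos_double_sin by (simp add: algebra_simps power2_eq_square)
  also have "\<dots> = (3 - 4 * (sin x)\<^sup>2) * sin x"
    by (simp add: cos_squared_eq algebra_simps)
  finally show ?case
    by (simp add: algebra_simps power2_eq_square)
next
  case (3 r)
  define A where "A = real (2 * Suc r + 1) * x"
  have "sin (A + 2 * x) = 2 * cos (2 * x) * sin A - sin (A - 2 * x)"
    unfolding sin_add sin_diff by (simp add: algebra_simps)
  also have "cos (2 * x) = 1 - 2 * sin x ^ 2"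
    by (rule cos_double_sin)
  finally have "sin (A + 2 * x) = (2 - 4 * sin x ^ 2) * sin A - sin (A - 2 * x)"
    by (simp add: algebra_simps)
  moreover have "poly (sin_multiple_poly (Suc r)) (sin x) * sin x = sin A"
    using 3 unfolding A_def by simp
  moreover have "poly (sin_multiple_poly r) (sin x) * sin x = sin (A - 2 * x)"
    using 3 unfolding A_def by (simp add: algebra_simps)
  moreover have "poly (sin_multiple_poly (Suc (Suc r))) (sin x) * sin x
      = (2 - 4 * sin x ^ 2) * (poly (sin_multiple_poly (Suc r)) (sin x) * sin x)
        - poly (sin_multiple_poly r) (sin x) * sin x"
    by (simp add: algebra_simps power2_eq_square)
  moreover have "real (2 * Suc (Suc r) + 1) * x = A + 2 * x"
    unfolding A_def by (simp add: algebra_simps)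
  ultimately show ?case
    by simp
qed simp

lemma poly_sin_multiple_poly_0: "poly (sin_multiple_poly r) 0 = real (2 * r + 1)"
  by (induction r rule: sin_multiple_poly.induct) auto

lemma abs_sin_mult_le: "\<bar>sin (real n * x)\<bar> \<le> real n * \<bar>sin x\<bar>"
proof (induction n)
  case (Suc n)
  have "real (Suc n) * x = real n * x + x"
    by (simp add: algebra_simps)
  then have "sin (real (Suc n) * x) = sin (real n * x) * cos x + cos (real n * x) * sin x"
    by (simp only: sin_add)
  also have "\<bar>\<dots>\<bar> \<le> \<bar>sin (real n * x)\<bar> * \<bar>cos x\<bar> + \<bar>cos (real n * x)\<bar> * \<bar>sin x\<bar>"
    by (metis abs_mult abs_triangle_ineq)
  also have "\<dots> \<le> \<bar>sin (real n * x)\<bar> + \<bar>sin x\<bar>"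
    by (intro add_mono mult_left_le mult_left_le_one_le) (auto simp: abs_cos_le_one)
  finally show ?case
    using Suc by (simp add: algebra_simps)
qed simp

text \<open>Each step from \<open>(2r+1)x\<close> to \<open>(2r+3)x\<close> adds \<open>2 cos((2r+2)x) sin x \<ge> sin x\<close>.\<close>
lemma sin_odd_multiple_ge:
  assumes "0 \<le> x" "real (2 * r + 1) * x \<le> pi / 3"
  shows "real (r + 1) * sin x \<le> sin (real (2 * r + 1) * x)"
  using assms
proof (induction r)
  case (Suc r)
  define A where "A = real (2 * r + 1) * x"
  have step: "sin (A + 2 * x) = sin A + 2 * cos (A + x) * sin x"
    using sin_add[of "A + x" x] sin_diff[of "A + x" x] by (simp add: algebra_simps)
  have "1 / 2 \<le> cos (A + x)"
  proof -
    have "cos (pi / 3) \<le> cos (A + x)"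
      using Suc.prems pi_ge_two unfolding A_def
      by (intro cos_monotone_0_pi_le) (auto simp: algebra_simps)
    then show ?thesis
      by (simp add: cos_60)
  qed
  moreover have "0 \<le> sin x"
  proof (rule sin_ge_zero)
    have "1 * x \<le> real (2 * Suc r + 1) * x"
      by (rule mult_right_mono) (use Suc.prems in auto)
    then show "x \<le> pi"
      using Suc.prems pi_gt_zero by linarith
  qed fact
  ultimately have half: "1 / 2 * sin x \<le> cos (A + x) * sin x"
    by (rule mult_right_mono)
  have "real (Suc r + 1) * sin x = real (r + 1) * sin x + sin x"
    by (simp add: algebra_simps)
  also have "\<dots> \<le> sin A + 2 * cos (A + x) * sin x"
  proof -
    have "real (r + 1) * sin x \<le> sin A"
      unfolding A_def using Suc.prems by (intro Suc.IH) (auto simp: algebra_simps)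
    then show ?thesis
      using half by linarith
  qed
  also have "\<dots> = sin (A + 2 * x)"
    by (rule step[symmetric])
  also have "A + 2 * x = real (2 * Suc r + 1) * x"
    unfolding A_def by (simp add: algebra_simps)
  finally show ?case .
qed simp

lemma sin_ge_half:
  fixes y :: real
  assumes "0 \<le> y" "y \<le> 2 / 3"
  shows "y / 2 \<le> sin y"
proof (cases "y = 0")
  case False
  then have "0 < y"
    using assms by simp
  from MVT2[OF this, of sin cos] obtain z where z: "0 < z" "z < y" "sin y = y * cos z"
    by (auto intro: DERIV_sin)
  have "cos (pi / 3) \<le> cos z"
    using z assms pi_ge_two by (intro cos_monotone_0_pi_le) auto
  then have "1 / 2 \<le> cos z"
    by (simp add: cos_60)
  then show ?thesis
    using z \<open>0 < y\<close> mult_left_mono[of "1 / 2" "cos z" y] by simp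
qed simp

lemma abs_poly_sin_multiple_poly_le:
  assumes "\<bar>s\<bar> \<le> 1"
  shows "\<bar>poly (sin_multiple_poly r) s\<bar> \<le> real (2 * r + 1)"
proof (cases "s = 0")
  case True
  then show ?thesis
    by (simp add: poly_sin_multiple_poly_0)
next
  case False
  have "\<bar>poly (sin_multiple_poly r) s\<bar> * \<bar>s\<bar> \<le> real (2 * r + 1) * \<bar>s\<bar>"
    using poly_sin_multiple_poly_sin[of r "arcsin s"] abs_sin_mult_le[of "2 * r + 1" "arcsin s"] assms
    by (simp add: abs_mult)
  then show ?thesis
    by (rule mult_right_le_imp_le) (use False in simp)
qed

lemma abs_mult_poly_sin_multiple_poly_le:
  assumes "\<bar>s\<bar> \<le> 1"
  shows "\<bar>s\<bar> * \<bar>poly (sin_multiple_poly r) s\<bar> \<le> 1"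
proof -
  have "s * poly (sin_multiple_poly r) s = sin (real (2 * r + 1) * arcsin s)"
    using poly_sin_multiple_poly_sin[of r "arcsin s"] assms by (simp add: mult.commute)
  then have "\<bar>s * poly (sin_multiple_poly r) s\<bar> \<le> 1"
    by (simp only: abs_sin_le_one)
  then show ?thesis
    by (simp add: abs_mult)
qed

lemma poly_sin_multiple_poly_ge:
  assumes "0 \<le> s" "s \<le> 1 / (4 * real (2 * r + 1))"
  shows "real (r + 1) \<le> poly (sin_multiple_poly r) s"
proof (cases "s = 0")
  case True
  then show ?thesis
    by (simp add: poly_sin_multiple_poly_0)
next
  case False
  then have s0: "0 < s"
    using assms by simp
  have s1: "s \<le> 1 / 4"
    using assms(2) by (rule order_trans) (auto simp: field_simps)
  define x where "x = arcsin s"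
  have sx: "sin x = s"
    unfolding x_def using assms s1 by simp
  have x0: "0 \<le> x"
    unfolding x_def using s0 s1 arcsin_le_mono[of 0 s] by simp
  have "s \<le> sin (2 * s)"
    using sin_ge_half[of "2 * s"] s0 s1 by simp
  then have "x \<le> arcsin (sin (2 * s))"
    unfolding x_def using arcsin_le_mono[of s "sin (2 * s)"] abs_sin_le_one[of "2 * s"] s0 s1 by simp
  also have "\<dots> = 2 * s"
    using s1 s0 pi_ge_two by (intro arcsin_sin) auto
  finally have "real (2 * r + 1) * x \<le> real (2 * r + 1) * (2 * s)"
    by (intro mult_left_mono) auto
  also have "\<dots> \<le> 1 / 2"
    using assms(2) by (simp add: field_simps)
  also have "\<dots> \<le> pi / 3"
    using pi_ge_two by simp
  finally have "real (r + 1) * s \<le> poly (sin_multiple_poly r) s * s"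
    using sin_odd_multiple_ge[OF x0] poly_sin_multiple_poly_sin[of r x] unfolding sx by simp
  then show ?thesis
    by (rule mult_right_le_imp_le[OF _ s0])
qed

section \<open>The Jackson kernel\<close>

definition jackson_kernel :: "nat \<Rightarrow> real poly" where
  "jackson_kernel r = sin_multiple_poly r ^ 4"

definition jackson_mass :: "nat \<Rightarrow> real" where
  "jackson_mass r = (\<integral>s. indicator {-1..1} s * poly (jackson_kernel r) s \<partial>lborel)"

definition jackson_moment :: "nat \<Rightarrow> real" where
  "jackson_moment r = (\<integral>s. indicator {-1..1} s * (\<bar>s\<bar> * poly (jackson_kernel r) s) \<partial>lborel)"

lemma integrable_indicator_Icc_mult:
  fixes f :: "real \<Rightarrow> real"
  assumes "continuous_on {a..b} f"
  shows "integrable lborel (\<lambda>s. indicator {a..b} s * f s)"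
  using borel_integrable_compact[OF compact_Icc assms] by simp

lemma poly_jackson_kernel_nonneg: "0 \<le> poly (jackson_kernel r) s"
  by (simp add: jackson_kernel_def zero_le_even_power)

lemma degree_jackson_kernel: "degree (jackson_kernel r) \<le> 8 * r"
  using degree_sin_multiple_poly[of r] degree_power_le[of "sin_multiple_poly r" 4]
  unfolding jackson_kernel_def by linarith

lemma sum_abs_coeff_jackson_kernel_le: "(\<Sum>j\<le>D. \<bar>coeff (jackson_kernel r) j\<bar>) \<le> 2401 * 9 ^ (4 * r)"
proof -
  have "(\<Sum>j\<le>D. \<bar>coeff (jackson_kernel r) j\<bar>) \<le> poly (sin_multiple_majorant r ^ 4) 1"
    unfolding jackson_kernel_def
    by (intro sum_abs_coeff_le_poly_one coeff_dominated_power coeff_dominated_sin_multiple)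
  also have "\<dots> \<le> (7 * 9 ^ r) ^ 4"
    unfolding poly_power by (intro power_mono) (use poly_sin_multiple_majorant_one[of r] in auto)
  also have "\<dots> = 2401 * 9 ^ (4 * r)"
    by (simp add: power_mult_distrib power_mult[symmetric] mult.commute)
  finally show ?thesis .
qed

text \<open>The kernel is at least \<open>(m/2)^4\<close> on \<open>[0, 1/(4m)]\<close>, where \<open>m = 2r+1\<close>.\<close>
lemma jackson_mass_ge: "real (2 * r + 1) ^ 3 / 64 \<le> jackson_mass r"
proof -
  define m where "m = real (2 * r + 1)"
  have m1: "1 \<le> m"
    unfolding m_def by simp
  define d where "d = 1 / (4 * m)"
  have d: "0 \<le> d" "d \<le> 1"
    unfolding d_def using m1 by (auto simp: field_simps)
  have "(\<integral>s. indicator {0..d} s * (m / 2) ^ 4 \<partial>lborel) \<le> jackson_mass r"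
    unfolding jackson_mass_def
  proof (rule integral_mono)
    show "integrable lborel (\<lambda>s. indicator {0..d} s * (m / 2) ^ 4)"
      using d by (intro integrable_mult_left integrable_real_indicator) auto
    show "integrable lborel (\<lambda>s. indicator {-1..1} s * poly (jackson_kernel r) s)"
      by (intro integrable_indicator_Icc_mult continuous_intros)
    fix s :: real
    show "indicator {0..d} s * (m / 2) ^ 4 \<le> indicator {-1..1} s * poly (jackson_kernel r) s"
    proof (cases "s \<in> {0..d}")
      case True
      have "m / 2 \<le> real (r + 1)"
        unfolding m_def by simp
      also have "\<dots> \<le> poly (sin_multiple_poly r) s"
        using True unfolding d_def m_def by (intro poly_sin_multiple_poly_ge) auto
      finally have "(m / 2) ^ 4 \<le> poly (jackson_kernel r) s"
        unfolding jackson_kernel_def poly_power by (rule power_mono) (use m1 in simp)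
      then show ?thesis
        using True d by (simp add: indicator_def)
    qed (simp add: poly_jackson_kernel_nonneg)
  qed
  also have "(\<integral>s. indicator {0..d} s * (m / 2) ^ 4 \<partial>lborel) = m ^ 3 / 64"
    using d m1 unfolding d_def by (simp add: field_simps eval_nat_numeral)
  finally show ?thesis
    unfolding m_def .
qed

lemma integral_inverse_cube:
  fixes a b :: real
  assumes "0 < a" "a \<le> b"
  shows "(\<integral>s. indicator {a..b} s * (1 / \<bar>s\<bar> ^ 3) \<partial>lborel) = (1 / a\<^sup>2 - 1 / b\<^sup>2) / 2"
proof -
  have "(\<integral>s. indicator {a..b} s * (1 / \<bar>s\<bar> ^ 3) \<partial>lborel) = (\<integral>s. indicator {a..b} s *\<^sub>R (1 / s ^ 3) \<partial>lborel)"
    using assms by (intro Bochner_Integration.integral_cong) (auto split: split_indicator)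
  also have "\<dots> = - 1 / (2 * b\<^sup>2) - - 1 / (2 * a\<^sup>2)"
  proof (rule integral_FTC_atLeastAtMost[OF assms(2)])
    fix x assume "a \<le> x" "x \<le> b"
    then have "x \<noteq> 0"
      using assms by auto
    then show "((\<lambda>s. - 1 / (2 * s\<^sup>2)) has_vector_derivative 1 / x ^ 3) (at x within {a..b})"
      unfolding has_real_derivative_iff_has_vector_derivative[symmetric]
      by (auto intro!: derivative_eq_intros simp: field_simps eval_nat_numeral)
  next
    show "continuous_on {a..b} (\<lambda>s. 1 / s ^ 3)"
      using assms by (intro continuous_intros) auto
  qed
  finally show ?thesis
    by (simp add: field_simps)
qed

lemma integral_inverse_cube_reflect:
  fixes a b :: real
  shows "(\<integral>s. indicator {-b..-a} s * (1 / \<bar>s\<bar> ^ 3) \<partial>lborel) = (\<integral>s. indicator {a..b} s * (1 / \<bar>s\<bar> ^ 3) \<partial>lborel)"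
proof -
  have "(\<integral>s. indicator {-b..-a} s * (1 / \<bar>s\<bar> ^ 3) \<partial>lborel)
      = \<bar>-1\<bar> *\<^sub>R (\<integral>s. indicator {-b..-a} (0 + -1 * s) * (1 / \<bar>0 + -1 * s\<bar> ^ 3) \<partial>lborel)"
    by (rule lborel_integral_real_affine) simp
  then show ?thesis
    by (simp add: indicator_def conj_commute)
qed

lemma integral_inverse_cube_tails:
  fixes d :: real
  assumes "0 < d" "d \<le> 1"
  shows "integrable lborel (\<lambda>s. (indicator {d..1} s + indicator {-1..-d} s) * (1 / \<bar>s\<bar> ^ 3))"
    and "(\<integral>s. (indicator {d..1} s + indicator {-1..-d} s) * (1 / \<bar>s\<bar> ^ 3) \<partial>lborel) = 1 / d\<^sup>2 - 1"
proof -
  have int: "integrable lborel (\<lambda>s. indicator {a..b} s * (1 / \<bar>s\<bar> ^ 3))" if "0 < a \<or> b < 0" for a b :: real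
    by (intro integrable_indicator_Icc_mult continuous_intros) (use that in auto)
  show "integrable lborel (\<lambda>s. (indicator {d..1} s + indicator {-1..-d} s) * (1 / \<bar>s\<bar> ^ 3))"
    unfolding distrib_right by (intro Bochner_Integration.integrable_add int) (use assms in auto)
  show "(\<integral>s. (indicator {d..1} s + indicator {-1..-d} s) * (1 / \<bar>s\<bar> ^ 3) \<partial>lborel) = 1 / d\<^sup>2 - 1"
    unfolding distrib_right
    using assms int integral_inverse_cube[of d 1] integral_inverse_cube_reflect[of 1 d]
    by (subst Bochner_Integration.integral_add) simp_all
qed

lemma abs_mult_poly_jackson_kernel_le:
  assumes "\<bar>s\<bar> \<le> 1"
  shows "\<bar>s\<bar> * poly (jackson_kernel r) s
    \<le> (if \<bar>s\<bar> \<le> 1 / real (2 * r + 1) then real (2 * r + 1) ^ 3 else 1 / \<bar>s\<bar> ^ 3)"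
proof -
  define m where "m = real (2 * r + 1)"
  have m1: "1 \<le> m"
    unfolding m_def by simp
  have K: "poly (jackson_kernel r) s = \<bar>poly (sin_multiple_poly r) s\<bar> ^ 4"
    by (simp add: jackson_kernel_def power_even_abs_numeral)
  show ?thesis
  proof (cases "\<bar>s\<bar> \<le> 1 / m")
    case True
    have "\<bar>poly (sin_multiple_poly r) s\<bar> ^ 4 \<le> m ^ 4"
      unfolding m_def using abs_poly_sin_multiple_poly_le[OF assms] by (intro power_mono) auto
    then have "\<bar>s\<bar> * poly (jackson_kernel r) s \<le> 1 / m * m ^ 4"
      unfolding K using True m1 by (intro mult_mono) auto
    also have "\<dots> = m ^ 3"
      using m1 by (simp add: field_simps eval_nat_numeral)
    finally show ?thesis
      using True unfolding m_def by simp
  next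
    case False
    moreover have "0 < 1 / m"
      using m1 by simp
    ultimately have "0 < \<bar>s\<bar>"
      by linarith
    have "\<bar>s\<bar> ^ 3 * (\<bar>s\<bar> * poly (jackson_kernel r) s) = (\<bar>s\<bar> * \<bar>poly (sin_multiple_poly r) s\<bar>) ^ 4"
      unfolding K by algebra
    also have "\<dots> \<le> 1"
      using abs_mult_poly_sin_multiple_poly_le[OF assms] by (intro power_le_one) auto
    finally show ?thesis
      using False \<open>0 < \<bar>s\<bar>\<close> unfolding m_def by (simp add: field_simps)
  qed
qed

lemma jackson_moment_le: "jackson_moment r \<le> 3 * real (2 * r + 1) ^ 2"
proof -
  define m where "m = real (2 * r + 1)"
  have m1: "1 \<le> m"
    unfolding m_def by simp
  define d where "d = 1 / m"
  have d: "0 < d" "d \<le> 1"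
    unfolding d_def using m1 by auto
  define tail where "tail s = (indicator {d..1} s + indicator {-1..-d} s) * (1 / \<bar>s\<bar> ^ 3)" for s :: real
  define g where "g s = indicator {-d..d} s * m ^ 3 + tail s" for s :: real
  have int_tail: "integrable lborel tail"
    unfolding tail_def by (rule integral_inverse_cube_tails(1)[OF d])
  have int_center: "integrable lborel (\<lambda>s. indicator {-d..d} s * m ^ 3)"
    using d by (intro integrable_mult_left integrable_real_indicator) auto
  have "jackson_moment r \<le> (\<integral>s. g s \<partial>lborel)"
    unfolding jackson_moment_def
  proof (rule integral_mono)
    show "integrable lborel (\<lambda>s. indicator {-1..1} s * (\<bar>s\<bar> * poly (jackson_kernel r) s))"
      by (intro integrable_indicator_Icc_mult continuous_intros)
    show "integrable lborel g"
      unfolding g_def by (intro Bochner_Integration.integrable_add int_center int_tail)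
    fix s :: real
    have "0 \<le> tail s"
      unfolding tail_def by simp
    show "indicator {-1..1} s * (\<bar>s\<bar> * poly (jackson_kernel r) s) \<le> g s"
    proof (cases "\<bar>s\<bar> \<le> 1")
      case True
      have "(if \<bar>s\<bar> \<le> d then m ^ 3 else 1 / \<bar>s\<bar> ^ 3) \<le> g s"
        unfolding g_def tail_def using True d \<open>0 \<le> tail s\<close>
        by (auto simp: indicator_def abs_if tail_def split: if_splits)
      then show ?thesis
        using abs_mult_poly_jackson_kernel_le[OF True, of r] True unfolding m_def d_def
        by (simp add: abs_le_iff)
    next
      case False
      then show ?thesis
        using d \<open>0 \<le> tail s\<close> by (auto simp: g_def indicator_def)
    qed
  qed
  also have "(\<integral>s. g s \<partial>lborel) = (\<integral>s. indicator {-d..d} s * m ^ 3 \<partial>lborel) + (\<integral>s. tail s \<partial>lborel)"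
    unfolding g_def by (rule Bochner_Integration.integral_add[OF int_center int_tail])
  also have "(\<integral>s. indicator {-d..d} s * m ^ 3 \<partial>lborel) = 2 * m ^ 2"
    using m1 unfolding d_def by (simp add: field_simps eval_nat_numeral)
  also have "(\<integral>s. tail s \<partial>lborel) = 1 / d\<^sup>2 - 1"
    unfolding tail_def by (rule integral_inverse_cube_tails(2)[OF d])
  also have "2 * m ^ 2 + (1 / d\<^sup>2 - 1) \<le> 3 * m ^ 2"
    using m1 unfolding d_def by (simp add: field_simps)
  finally show ?thesis
    unfolding m_def .
qed

section \<open>Polynomial approximation of Lipschitz functions\<close>

lemma integral_mult_poly_shift:
  fixes p :: "real poly" and f :: "real \<Rightarrow> real"
  assumes deg: "degree p \<le> D" and int: "\<And>n. integrable lborel (\<lambda>u. f u * u ^ n)"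
  shows "(\<integral>u. f u * poly p ((x - u) / R) \<partial>lborel) =
    (\<Sum>i\<le>D. (\<Sum>j\<le>D. coeff p j / R ^ j * of_nat (j choose i) * (\<integral>u. f u * (- u) ^ (j - i) \<partial>lborel)) * x ^ i)"
proof -
  have int': "integrable lborel (\<lambda>u. f u * (- u) ^ n)" for n
  proof -
    have "(\<lambda>u. f u * (- u) ^ n) = (\<lambda>u. (-1) ^ n * (f u * u ^ n))"
      by (rule ext) (metis mult.left_commute power_minus)
    then show ?thesis
      by (simp only:) (intro integrable_mult_right int)
  qed
  define a where "a i j = coeff p j / R ^ j * of_nat (j choose i) * x ^ i" for i j
  have expand: "f u * poly p ((x - u) / R) = (\<Sum>i\<le>D. \<Sum>j\<le>D. a i j * (f u * (- u) ^ (j - i)))" for u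
  proof -
    have "poly p ((x - u) / R) = (\<Sum>j\<le>D. coeff p j / R ^ j * (x + - u) ^ j)"
      unfolding poly_altdef using deg
      by (intro sum.mono_neutral_cong_left) (auto simp: coeff_eq_0 power_divide)
    also have "\<dots> = (\<Sum>j\<le>D. \<Sum>i\<le>D. coeff p j / R ^ j * (of_nat (j choose i) * x ^ i * (- u) ^ (j - i)))"
    proof (rule sum.cong[OF refl])
      fix j assume "j \<in> {..D}"
      then have "(x + - u) ^ j = (\<Sum>i\<le>D. of_nat (j choose i) * x ^ i * (- u) ^ (j - i))"
        unfolding binomial_ring by (intro sum.mono_neutral_left) auto
      then show "coeff p j / R ^ j * (x + - u) ^ j =
          (\<Sum>i\<le>D. coeff p j / R ^ j * (of_nat (j choose i) * x ^ i * (- u) ^ (j - i)))"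
        by (simp add: sum_distrib_left)
    qed
    finally show ?thesis
      unfolding a_def by (subst sum.swap) (simp add: sum_distrib_left mult_ac)
  qed
  have int_term: "integrable lborel (\<lambda>u. a * (f u * (- u) ^ n))" for a n
    by (intro integrable_mult_right int')
  have "(\<integral>u. f u * poly p ((x - u) / R) \<partial>lborel) =
      (\<Sum>i\<le>D. \<Sum>j\<le>D. a i j * (\<integral>u. f u * (- u) ^ (j - i) \<partial>lborel))"
  proof -
    have "(\<integral>u. (\<Sum>j\<le>D. a i j * (f u * (- u) ^ (j - i))) \<partial>lborel) =
        (\<Sum>j\<le>D. a i j * (\<integral>u. f u * (- u) ^ (j - i) \<partial>lborel))" for i
      by (subst Bochner_Integration.integral_sum) (auto intro: int_term int')
    moreover have "(\<integral>u. (\<Sum>i\<le>D. \<Sum>j\<le>D. a i j * (f u * (- u) ^ (j - i))) \<partial>lborel) =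
        (\<Sum>i\<le>D. \<integral>u. (\<Sum>j\<le>D. a i j * (f u * (- u) ^ (j - i))) \<partial>lborel)"
      by (intro Bochner_Integration.integral_sum Bochner_Integration.integrable_sum int_term)
    ultimately show ?thesis
      unfolding expand by simp
  qed
  then show ?thesis
    by (simp add: a_def sum_distrib_left sum_distrib_right mult_ac)
qed

text \<open>\<open>H\<close> is cut off at \<open>\<plusminus>2L\<close>, so for \<open>x \<in> [-L, L]\<close> the kernel is only evaluated on \<open>[-3/4, 3/4]\<close>.\<close>
definition jackson_approx :: "(real \<Rightarrow> real) \<Rightarrow> real \<Rightarrow> nat \<Rightarrow> real \<Rightarrow> real" where
  "jackson_approx H L r x =
    (\<integral>u. indicator {-2*L..2*L} u * H u * poly (jackson_kernel r) ((x - u) / (4 * L)) \<partial>lborel)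
      / (4 * L * jackson_mass r)"

lemma jackson_mass_pos: "0 < jackson_mass r"
  by (rule less_le_trans[OF _ jackson_mass_ge]) simp

context
  fixes H :: "real \<Rightarrow> real" and L :: real
  assumes L: "1 \<le> L" and lip: "\<And>a b. \<bar>H a - H b\<bar> \<le> \<bar>a - b\<bar>" and H0: "H 0 = 0"
begin

lemma integrable_cutoff_mult:
  assumes "continuous_on UNIV g"
  shows "integrable lborel (\<lambda>u. indicator {-2*L..2*L} u * H u * g u)"
  using integrable_indicator_Icc_mult[of "-2*L" "2*L" "\<lambda>u. H u * g u"]
    continuous_on_mult[OF lipschitz_continuous_on[OF lip] continuous_on_subset[OF assms]]
  by (simp add: mult.assoc)

lemma abs_integral_cutoff_mult_power_le:
  "\<bar>\<integral>u. indicator {-2*L..2*L} u * H u * (- u) ^ n \<partial>lborel\<bar> \<le> 4 * L * (2 * L) ^ (n + 1)"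
proof -
  have "\<bar>\<integral>u. indicator {-2*L..2*L} u * H u * (- u) ^ n \<partial>lborel\<bar>
      \<le> (\<integral>u. indicator {-2*L..2*L} u * (2 * L) ^ (n + 1) \<partial>lborel)"
  proof (rule integral_abs_bound_integral)
    show "integrable lborel (\<lambda>u. indicator {-2*L..2*L} u * H u * (- u) ^ n)"
      by (intro integrable_cutoff_mult continuous_intros)
    show "integrable lborel (\<lambda>u. indicator {-2*L..2*L} u * (2 * L) ^ (n + 1))"
      using L by (intro integrable_mult_left integrable_real_indicator) auto
    fix u :: real
    have "\<bar>H u\<bar> * \<bar>u\<bar> ^ n \<le> (2 * L) * (2 * L) ^ n" if "\<bar>u\<bar> \<le> 2 * L"
      using lipschitz_abs_le[OF lip H0, of u] that by (intro mult_mono power_mono) auto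
    then show "\<bar>indicator {-2*L..2*L} u * H u * (- u) ^ n\<bar> \<le> indicator {-2*L..2*L} u * (2 * L) ^ (n + 1)"
      by (auto simp: indicator_def abs_mult power_abs abs_le_iff)
  qed
  also have "\<dots> = 4 * L * (2 * L) ^ (n + 1)"
    using L by simp
  finally show ?thesis .
qed

lemma binomial_mult_abs_integral_cutoff_le:
  assumes "1 \<le> i" "i \<le> j"
  shows "of_nat (j choose i) * \<bar>\<integral>u. indicator {-2*L..2*L} u * H u * (- u) ^ (j - i) \<partial>lborel\<bar>
    \<le> (4 * L) ^ (j + 1)"
proof -
  have "of_nat (j choose i) * \<bar>\<integral>u. indicator {-2*L..2*L} u * H u * (- u) ^ (j - i) \<partial>lborel\<bar>
      \<le> 2 ^ j * (4 * L * (2 * L) ^ (j - i + 1))"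
    using abs_integral_cutoff_mult_power_le by (intro mult_mono) (auto simp: binomial_le_pow2)
  also have "\<dots> \<le> 2 ^ j * (4 * L * (2 * L) ^ j)"
    using L assms by (intro mult_left_mono power_increasing) auto
  also have "\<dots> = 4 * L * (2 ^ j * (2 * L) ^ j)"
    by (simp add: ac_simps)
  also have "2 ^ j * (2 * L) ^ j = (4 * L) ^ j"
    by (subst power_mult_distrib[symmetric]) simp
  finally show ?thesis
    by (simp add: mult.commute)
qed

lemma jackson_approx_expansion:
  obtains c where "\<And>x. jackson_approx H L r x = (\<Sum>i\<le>8*r. c i * x ^ i)"
    and "\<And>i. i \<in> {1..8*r} \<Longrightarrow> \<bar>c i\<bar> \<le> (\<Sum>j\<le>8*r. \<bar>coeff (jackson_kernel r) j\<bar>) / jackson_mass r"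
proof
  define K where "K = jackson_kernel r"
  define R where "R = 4 * L"
  define f where "f u = indicator {-2*L..2*L} u * H u" for u
  define J where "J i j = (\<integral>u. f u * (- u) ^ (j - i) \<partial>lborel)" for i j :: nat
  define c where "c i = (\<Sum>j\<le>8*r. coeff K j / R ^ j * of_nat (j choose i) * J i j) / (R * jackson_mass r)" for i
  have R0: "0 < R"
    using L unfolding R_def by simp
  have int_f: "integrable lborel (\<lambda>u. f u * u ^ n)" for n
    unfolding f_def by (intro integrable_cutoff_mult continuous_intros)
  show "jackson_approx H L r x = (\<Sum>i\<le>8*r. c i * x ^ i)" for x
    unfolding jackson_approx_def K_def[symmetric] R_def[symmetric] f_def[symmetric]
      integral_mult_poly_shift[OF degree_jackson_kernel[of r, folded K_def] int_f] J_def[symmetric]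
    by (subst sum_divide_distrib) (simp add: c_def)
  fix i assume i: "i \<in> {1..8*r}"
  have term_le: "\<bar>coeff K j / R ^ j * of_nat (j choose i) * J i j\<bar> \<le> \<bar>coeff K j\<bar> * R" for j
  proof (cases "i \<le> j")
    case True
    have "\<bar>coeff K j\<bar> / R ^ j * (of_nat (j choose i) * \<bar>J i j\<bar>) \<le> \<bar>coeff K j\<bar> / R ^ j * R ^ (j + 1)"
      unfolding J_def f_def R_def using i True L
      by (intro mult_left_mono binomial_mult_abs_integral_cutoff_le) auto
    then show ?thesis
      using R0 by (simp add: abs_mult abs_divide mult_ac)
  qed (use R0 in \<open>simp add: binomial_eq_0\<close>)
  have "\<bar>\<Sum>j\<le>8*r. coeff K j / R ^ j * of_nat (j choose i) * J i j\<bar> \<le> (\<Sum>j\<le>8*r. \<bar>coeff K j\<bar> * R)"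
    by (rule order_trans[OF sum_abs sum_mono[OF term_le]])
  then have "\<bar>c i\<bar> \<le> (\<Sum>j\<le>8*r. \<bar>coeff K j\<bar> * R) / (R * jackson_mass r)"
    unfolding c_def abs_divide using R0 jackson_mass_pos[of r]
    by (simp add: abs_of_pos divide_right_mono)
  also have "\<dots> = (\<Sum>j\<le>8*r. \<bar>coeff K j\<bar>) / jackson_mass r"
    using R0 by (simp add: sum_distrib_right[symmetric])
  finally show "\<bar>c i\<bar> \<le> (\<Sum>j\<le>8*r. \<bar>coeff (jackson_kernel r) j\<bar>) / jackson_mass r"
    unfolding K_def .
qed

lemma jackson_integrand_diff_le:
  assumes x: "x \<in> {-L..L}"
  shows "\<bar>indicator {-2*L..2*L} (x - 4 * L * s) * H (x - 4 * L * s) * poly (jackson_kernel r) s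
      - indicator {-1..1} s * H x * poly (jackson_kernel r) s\<bar>
    \<le> 8 * L * (indicator {-1..1} s * (\<bar>s\<bar> * poly (jackson_kernel r) s))"
proof -
  define K where "K = poly (jackson_kernel r) s"
  have K: "0 \<le> K"
    unfolding K_def by (rule poly_jackson_kernel_nonneg)
  show ?thesis
  proof (cases "x - 4 * L * s \<in> {-2*L..2*L}")
    case True
    then have "\<bar>4 * L * s\<bar> \<le> 3 * L"
      using x by (auto simp: abs_le_iff)
    then have "\<bar>s\<bar> \<le> 3 / 4"
      using L by (simp add: abs_mult field_simps)
    then have s: "s \<in> {-1..1}"
      by (auto simp: abs_le_iff)
    have "\<bar>H (x - 4 * L * s) - H x\<bar> * K \<le> (4 * L * \<bar>s\<bar>) * K"
      using lip[of "x - 4 * L * s" x] L K by (intro mult_right_mono) (auto simp: abs_mult)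
    also have "\<dots> \<le> (8 * L * \<bar>s\<bar>) * K"
      using L K by (intro mult_right_mono) auto
    finally show ?thesis
      using True s K unfolding K_def[symmetric] by (simp add: abs_mult left_diff_distrib[symmetric])
  next
    case False
    then have "L < \<bar>4 * L * s\<bar>"
      using x by (auto simp: abs_le_iff)
    then have "L \<le> 4 * L * \<bar>s\<bar>"
      using L by (simp add: abs_mult)
    also have "\<dots> \<le> 8 * L * \<bar>s\<bar>"
      using L by simp
    finally have "\<bar>H x\<bar> \<le> 8 * L * \<bar>s\<bar>"
      using lipschitz_abs_le[OF lip H0, of x] x by auto
    then have "\<bar>H x\<bar> * K \<le> (8 * L * \<bar>s\<bar>) * K"
      using K by (rule mult_right_mono)
    then show ?thesis
      using False K unfolding K_def[symmetric] by (auto simp: indicator_def abs_mult mult_ac)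
  qed
qed

lemma jackson_approx_rescaled:
  "jackson_approx H L r x =
    (\<integral>s. indicator {-2*L..2*L} (x - 4 * L * s) * H (x - 4 * L * s) * poly (jackson_kernel r) s \<partial>lborel)
      / jackson_mass r"
proof -
  define K where "K = poly (jackson_kernel r)"
  define R where "R = 4 * L"
  have R0: "0 < R"
    using L unfolding R_def by simp
  have "(\<integral>u. indicator {-2*L..2*L} u * H u * K ((x - u) / R) \<partial>lborel) = \<bar>- R\<bar> *\<^sub>R (\<integral>s.
      indicator {-2*L..2*L} (x + - R * s) * H (x + - R * s) * K ((x - (x + - R * s)) / R) \<partial>lborel)"
    using R0 by (intro lborel_integral_real_affine) simp
  then show ?thesis
    unfolding jackson_approx_def K_def[symmetric] R_def[symmetric] using R0 by simp
qed

lemma jackson_approx_error: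
  assumes x: "x \<in> {-L..L}"
  shows "\<bar>H x - jackson_approx H L r x\<bar> \<le> 8 * L * jackson_moment r / jackson_mass r"
proof -
  define K where "K = poly (jackson_kernel r)"
  define N where "N = jackson_mass r"
  define f1 where "f1 s = indicator {-2*L..2*L} (x - 4 * L * s) * H (x - 4 * L * s) * K s" for s
  define f2 where "f2 s = indicator {-1..1} s * H x * K s" for s
  have N0: "0 < N"
    unfolding N_def by (rule jackson_mass_pos)
  have int_f1: "integrable lborel f1"
  proof -
    have "f1 = (\<lambda>s. indicator {(x - 2*L) / (4 * L)..(x + 2*L) / (4 * L)} s * (H (x - 4 * L * s) * K s))"
      using L by (auto simp: f1_def indicator_def field_simps)
    then show ?thesis
      unfolding K_def
      by (simp only:) (intro integrable_indicator_Icc_mult continuous_intros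
                             continuous_on_compose2[OF lipschitz_continuous_on[OF lip, of UNIV]] subset_UNIV)
  qed
  have int_f2: "integrable lborel f2"
    unfolding f2_def K_def using integrable_indicator_Icc_mult[of "-1" 1 "\<lambda>s. H x * poly (jackson_kernel r) s"]
    by (simp add: continuous_intros mult_ac)
  have "(\<integral>s. f2 s \<partial>lborel) = H x * N"
    unfolding f2_def N_def jackson_mass_def K_def
    by (subst Bochner_Integration.integral_mult_right_zero[symmetric]) (simp add: mult_ac)
  then have "\<bar>H x - jackson_approx H L r x\<bar> = \<bar>\<integral>s. f1 s - f2 s \<partial>lborel\<bar> / N"
    unfolding jackson_approx_rescaled f1_def[symmetric, unfolded K_def] N_def[symmetric]
    using N0 int_f1 int_f2 by (simp add: abs_minus_commute field_simps)
  also have "\<dots> \<le> (\<integral>s. 8 * L * (indicator {-1..1} s * (\<bar>s\<bar> * K s)) \<partial>lborel) / N"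
  proof (intro divide_right_mono integral_abs_bound_integral)
    show "integrable lborel (\<lambda>s. f1 s - f2 s)"
      using int_f1 int_f2 by simp
    show "integrable lborel (\<lambda>s. 8 * L * (indicator {-1..1} s * (\<bar>s\<bar> * K s)))"
      unfolding K_def by (intro integrable_mult_right integrable_indicator_Icc_mult continuous_intros)
    show "\<bar>f1 s - f2 s\<bar> \<le> 8 * L * (indicator {-1..1} s * (\<bar>s\<bar> * K s))" for s
      unfolding f1_def f2_def K_def by (rule jackson_integrand_diff_le[OF x])
  qed (use N0 in simp)
  also have "\<dots> = 8 * L * jackson_moment r / jackson_mass r"
    unfolding jackson_moment_def N_def K_def by simp
  finally show ?thesis .
qed

end

lemma jackson_error_ratio_le:
  assumes "0 \<le> L"
  shows "8 * L * jackson_moment r / jackson_mass r \<le> 1536 * L / real (2 * r + 1)"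
proof -
  define m where "m = real (2 * r + 1)"
  have m1: "1 \<le> m"
    unfolding m_def by simp
  have "8 * L * jackson_moment r \<le> 8 * L * (3 * m ^ 2)"
    using jackson_moment_le[of r] assms unfolding m_def by (intro mult_left_mono) auto
  then have "8 * L * jackson_moment r / jackson_mass r \<le> 8 * L * (3 * m ^ 2) / (m ^ 3 / 64)"
    using jackson_mass_ge[of r] assms m1 unfolding m_def[symmetric] by (intro frac_le) auto
  also have "\<dots> = 1536 * L / m"
    using m1 by (simp add: field_simps eval_nat_numeral)
  finally show ?thesis
    unfolding m_def .
qed

lemma sum_abs_coeff_jackson_kernel_div_mass_le:
  "(\<Sum>j\<le>8*r. \<bar>coeff (jackson_kernel r) j\<bar>) / jackson_mass r \<le> 153664 * 9 ^ (4 * r)"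
proof -
  have "1 \<le> real (2 * r + 1) ^ 3"
    by (intro one_le_power) simp
  then have "1 / 64 \<le> jackson_mass r"
    using jackson_mass_ge[of r] by linarith
  then have "(\<Sum>j\<le>8*r. \<bar>coeff (jackson_kernel r) j\<bar>) / jackson_mass r \<le> (2401 * 9 ^ (4 * r)) / (1 / 64)"
    using sum_abs_coeff_jackson_kernel_le[where D="8 * r" and r=r] by (intro frac_le) auto
  then show ?thesis
    by simp
qed

lemma of_nat_mult_three_pow_le: "real n * 3 ^ n \<le> 9 ^ n"
proof -
  have "n < 2 ^ n"
    by (rule less_exp)
  also have "(2::nat) ^ n \<le> 3 ^ n"
    by (rule power_mono) auto
  finally have "real n \<le> 3 ^ n"
    by (metis less_imp_le of_nat_less_iff of_nat_numeral of_nat_power)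
  then have "real n * 3 ^ n \<le> 3 ^ n * 3 ^ n"
    by (rule mult_right_mono) simp
  then show ?thesis
    by (simp flip: power_mult_distrib)
qed

theorem lipschitz_polynomial_approximation:
  fixes H :: "real \<Rightarrow> real" and L :: real
  assumes L: "1 \<le> L" and lip: "\<And>a b. \<bar>H a - H b\<bar> \<le> \<bar>a - b\<bar>" and H0: "H 0 = 0"
  obtains c where "\<And>x. x \<in> {-L..L} \<Longrightarrow> \<bar>H x - (\<Sum>i\<le>8*r. c i * x ^ i)\<bar> \<le> 1536 * L / real (2 * r + 1)"
    and "(\<Sum>i=1..8*r. \<bar>c i\<bar>) \<le> 153664 * 9 ^ (8 * r)"
proof -
  obtain c where expansion: "\<And>x. jackson_approx H L r x = (\<Sum>i\<le>8*r. c i * x ^ i)"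
    and coeff: "\<And>i. i \<in> {1..8*r} \<Longrightarrow> \<bar>c i\<bar> \<le> (\<Sum>j\<le>8*r. \<bar>coeff (jackson_kernel r) j\<bar>) / jackson_mass r"
    using jackson_approx_expansion[OF L lip H0] by blast
  show ?thesis
  proof
    show "\<bar>H x - (\<Sum>i\<le>8*r. c i * x ^ i)\<bar> \<le> 1536 * L / real (2 * r + 1)" if "x \<in> {-L..L}" for x
      using jackson_approx_error[OF L lip H0 that, of r] jackson_error_ratio_le[of L r] L
      unfolding expansion by linarith
    have "(\<Sum>i=1..8*r. \<bar>c i\<bar>) \<le> (\<Sum>i=1..8*r. 153664 * 9 ^ (4 * r))"
      using order_trans[OF coeff sum_abs_coeff_jackson_kernel_div_mass_le] by (rule sum_mono)
    also have "\<dots> = 153664 * (real (8 * r) * 3 ^ (8 * r))"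
      by (simp add: power_mult)
    also have "\<dots> \<le> 153664 * 9 ^ (8 * r)"
      using of_nat_mult_three_pow_le[of "8 * r"] by simp
    finally show "(\<Sum>i=1..8*r. \<bar>c i\<bar>) \<le> 153664 * 9 ^ (8 * r)" .
  qed
qed

section \<open>Moments\<close>

lemma integrable_continuous_of_bounded_support:
  fixes M :: "real measure" and f :: "real \<Rightarrow> real"
  assumes "prob_space M" "sets M = sets borel" and "AE x in M. x \<in> {a..b}" and "continuous_on UNIV f"
  shows "integrable M f"
proof -
  interpret prob_space M by fact
  have "bounded (f ` {a..b})"
    by (intro compact_imp_bounded compact_continuous_image continuous_on_subset[OF assms(4)] compact_Icc)
       simp
  then obtain B where "\<forall>y\<in>f ` {a..b}. norm y \<le> B"
    unfolding bounded_iff by blast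
  then have B: "\<And>x. x \<in> {a..b} \<Longrightarrow> norm (f x) \<le> B"
    by blast
  show ?thesis
  proof (rule integrable_const_bound[where B=B])
    show "AE x in M. norm (f x) \<le> B"
      using assms(3) by eventually_elim (rule B)
    show "f \<in> borel_measurable M"
      by (subst measurable_cong_sets[OF assms(2) refl]) (rule borel_measurable_continuous_onI[OF assms(4)])
  qed
qed

lemma abs_integral_diff_le_of_bounded_support:
  fixes M :: "real measure" and f g :: "real \<Rightarrow> real"
  assumes M: "prob_space M" "sets M = sets borel" "AE x in M. x \<in> {a..b}"
    and cont: "continuous_on UNIV f" "continuous_on UNIV g"
    and le: "\<And>x. x \<in> {a..b} \<Longrightarrow> \<bar>f x - g x\<bar> \<le> e"
  shows "\<bar>(\<integral>x. f x \<partial>M) - (\<integral>x. g x \<partial>M)\<bar> \<le> e"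
proof -
  interpret prob_space M by fact
  have int: "integrable M f" "integrable M g"
    using integrable_continuous_of_bounded_support[OF M] cont by auto
  then have "\<bar>(\<integral>x. f x \<partial>M) - (\<integral>x. g x \<partial>M)\<bar> = \<bar>\<integral>x. f x - g x \<partial>M\<bar>"
    by simp
  also have "\<dots> \<le> (\<integral>x. \<bar>f x - g x\<bar> \<partial>M)"
    by (rule integral_abs_bound)
  also have "\<dots> \<le> (\<integral>x. e \<partial>M)"
    using int M(3) le by (intro integral_mono_AE) (auto elim: eventually_mono)
  finally show ?thesis
    by (simp add: prob_space)
qed

lemma abs_moment_diff_le_Mom:
  assumes "i \<in> {1..k}"
  shows "\<bar>(\<integral>x. x ^ i \<partial>\<mu>) - (\<integral>x. x ^ i \<partial>\<nu>)\<bar> \<le> Mom k \<mu> \<nu>"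
proof -
  have "\<bar>(\<integral>x. x ^ i \<partial>\<mu>) - (\<integral>x. x ^ i \<partial>\<nu>)\<bar> = sqrt (((\<integral>x. x ^ i \<partial>\<mu>) - (\<integral>x. x ^ i \<partial>\<nu>))\<^sup>2)"
    by simp
  also have "\<dots> \<le> Mom k \<mu> \<nu>"
    unfolding Mom_def using assms by (intro real_sqrt_le_mono member_le_sum) auto
  finally show ?thesis .
qed

lemma polynomial_integral_diff_le_Mom:
  fixes \<mu> \<nu> :: "real measure" and c :: "nat \<Rightarrow> real"
  assumes \<mu>: "prob_space \<mu>" "sets \<mu> = sets borel" "AE x in \<mu>. x \<in> {a..b}"
    and \<nu>: "prob_space \<nu>" "sets \<nu> = sets borel" "AE x in \<nu>. x \<in> {a..b}"
    and "D \<le> k"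
  shows "(\<integral>x. (\<Sum>i\<le>D. c i * x ^ i) \<partial>\<mu>) - (\<integral>x. (\<Sum>i\<le>D. c i * x ^ i) \<partial>\<nu>)
    \<le> (\<Sum>i=1..D. \<bar>c i\<bar>) * Mom k \<mu> \<nu>"
proof -
  define dm where "dm i = (\<integral>x. x ^ i \<partial>\<mu>) - (\<integral>x. x ^ i \<partial>\<nu>)" for i
  have integral_poly: "(\<integral>x. (\<Sum>i\<le>D. c i * x ^ i) \<partial>M) = (\<Sum>i\<le>D. c i * (\<integral>x. x ^ i \<partial>M))"
    if "prob_space M" "sets M = sets borel" "AE x in M. x \<in> {a..b}" for M
    using that by (simp add: integrable_continuous_of_bounded_support continuous_intros)
  have "(\<integral>x. (\<Sum>i\<le>D. c i * x ^ i) \<partial>\<mu>) - (\<integral>x. (\<Sum>i\<le>D. c i * x ^ i) \<partial>\<nu>) = (\<Sum>i\<le>D. c i * dm i)"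
    unfolding integral_poly[OF \<mu>] integral_poly[OF \<nu>] dm_def by (simp add: sum_subtractf right_diff_distrib)
  also have "\<dots> = (\<Sum>i=1..D. c i * dm i)"
    using \<mu>(1) \<nu>(1) by (simp add: atMost_atLeast0 sum.atLeast_Suc_atMost dm_def prob_space.prob_space)
  also have "\<dots> \<le> (\<Sum>i=1..D. \<bar>c i\<bar> * Mom k \<mu> \<nu>)"
  proof (rule sum_mono)
    fix i assume "i \<in> {1..D}"
    then have "\<bar>dm i\<bar> \<le> Mom k \<mu> \<nu>"
      unfolding dm_def using \<open>D \<le> k\<close> by (intro abs_moment_diff_le_Mom) auto
    then have "\<bar>c i\<bar> * \<bar>dm i\<bar> \<le> \<bar>c i\<bar> * Mom k \<mu> \<nu>"
      by (rule mult_left_mono) simp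
    moreover have "c i * dm i \<le> \<bar>c i\<bar> * \<bar>dm i\<bar>"
      by (simp flip: abs_mult)
    ultimately show "c i * dm i \<le> \<bar>c i\<bar> * Mom k \<mu> \<nu>"
      by linarith
  qed
  finally show ?thesis
    by (simp add: sum_distrib_right)
qed

lemma approximation_error_le_quarter:
  assumes c: "0 < c" and k: "2 * L * 49152 / c \<le> real k"
  shows "1536 * L / real (2 * (k div 16) + 1) \<le> c / 4"
proof -
  have "k < 16 * (2 * (k div 16) + 1)"
    by presburger
  then have "real k < 16 * real (2 * (k div 16) + 1)"
    by (metis of_nat_less_iff of_nat_mult of_nat_numeral)
  then have "real k * c < 16 * real (2 * (k div 16) + 1) * c"
    using c by (rule mult_strict_right_mono)
  moreover have "2 * L * 49152 \<le> real k * c"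
    using k c by (simp add: divide_le_eq)
  ultimately show ?thesis
    by (simp add: field_simps)
qed

lemma Mom_lower_bound:
  fixes \<mu> \<nu> :: "real measure" and L c :: real and k :: nat
  assumes \<mu>: "prob_space \<mu>" "sets \<mu> = sets borel" "AE x in \<mu>. x \<in> {-L..L}"
    and \<nu>: "prob_space \<nu>" "sets \<nu> = sets borel" "AE x in \<nu>. x \<in> {-L..L}"
    and L: "1 \<le> L" and c: "0 < c" "W1 \<mu> \<nu> = ennreal c"
    and k: "2 * L * 49152 / c \<le> real k"
  shows "c / (2 * 153664 * 3 ^ k) \<le> Mom k \<mu> \<nu>"
proof -
  have "real_distribution \<mu>" "real_distribution \<nu>"
    using \<mu> \<nu> by (simp_all add: real_distribution_def real_distribution_axioms_def)
  moreover have "integrable \<mu> (\<lambda>x. x)" "integrable \<nu> (\<lambda>x. x)"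
    using \<mu> \<nu> by (simp_all add: integrable_continuous_of_bounded_support)
  ultimately obtain G where G0: "G 0 = 0" and lip: "\<And>a b. \<bar>G a - G b\<bar> \<le> \<bar>a - b\<bar>"
    and W1_le: "W1 \<mu> \<nu> \<le> ennreal ((\<integral>x. G x \<partial>\<mu>) - (\<integral>x. G x \<partial>\<nu>))"
    by (rule W1_le_integral_diff_lipschitz) blast
  define r where "r = k div 16"
  define P where "P a x = (\<Sum>i\<le>8*r. a i * x ^ i)" for a :: "nat \<Rightarrow> real" and x :: real
  obtain a where approx: "\<And>x. x \<in> {-L..L} \<Longrightarrow> \<bar>G x - P a x\<bar> \<le> 1536 * L / real (2 * r + 1)"
    and coeff_sum: "(\<Sum>i=1..8*r. \<bar>a i\<bar>) \<le> 153664 * 9 ^ (8 * r)"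
    unfolding P_def by (rule lipschitz_polynomial_approximation[OF L lip G0, where r=r]) blast
  have close: "\<bar>(\<integral>x. G x \<partial>M) - (\<integral>x. P a x \<partial>M)\<bar> \<le> c / 4"
    if "prob_space M" "sets M = sets borel" "AE x in M. x \<in> {-L..L}" for M
    using that order_trans[OF approx approximation_error_le_quarter[OF c(1) k, folded r_def]] unfolding P_def
    by (intro abs_integral_diff_le_of_bounded_support lipschitz_continuous_on[OF lip] continuous_intros)
  have "9 ^ (8 * r) = (3::real) ^ (16 * r)"
    by (simp add: power_mult)
  also have "\<dots> \<le> 3 ^ k"
    unfolding r_def by (intro power_increasing) auto
  finally have "(\<Sum>i=1..8*r. \<bar>a i\<bar>) \<le> 153664 * 3 ^ k"
    using coeff_sum by linarith
  then have "(\<Sum>i=1..8*r. \<bar>a i\<bar>) * Mom k \<mu> \<nu> \<le> 153664 * 3 ^ k * Mom k \<mu> \<nu>"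
    by (rule mult_right_mono) (simp add: Mom_def sum_nonneg)
  moreover have "(\<integral>x. P a x \<partial>\<mu>) - (\<integral>x. P a x \<partial>\<nu>) \<le> (\<Sum>i=1..8*r. \<bar>a i\<bar>) * Mom k \<mu> \<nu>"
    unfolding P_def r_def by (intro polynomial_integral_diff_le_Mom[OF \<mu> \<nu>]) simp
  moreover have "c \<le> (\<integral>x. G x \<partial>\<mu>) - (\<integral>x. G x \<partial>\<nu>)"
    using W1_le c by (simp add: ennreal_le_iff2)
  ultimately have "c / 2 \<le> 153664 * 3 ^ k * Mom k \<mu> \<nu>"
    using close[OF \<mu>] close[OF \<nu>] by linarith
  then show ?thesis
    by (simp add: field_simps)
qed

theorem corollary9p9:
  "\<exists>C C' :: real. C > 0 \<and> C' > 0 \<and>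
    (\<forall>(\<mu> :: real measure) (\<nu> :: real measure) (L :: real) (c :: real) (k :: nat).
       prob_space \<mu> \<longrightarrow> prob_space \<nu> \<longrightarrow>
       sets \<mu> = sets borel \<longrightarrow> sets \<nu> = sets borel \<longrightarrow>
       L \<ge> 1 \<longrightarrow>
       (AE x in \<mu>. x \<in> {-L..L}) \<longrightarrow> (AE x in \<nu>. x \<in> {-L..L}) \<longrightarrow>
       c > 0 \<longrightarrow> W1 \<mu> \<nu> = ennreal c \<longrightarrow>
       int k \<ge> \<lceil>2 * L * C / c\<rceil> \<longrightarrow>
       Mom k \<mu> \<nu> \<ge> c / (2 * C' * 3 ^ k))"
proof (rule exI[where x=49152], rule exI[where x=153664], intro conjI allI impI)
  fix \<mu> \<nu> :: "real measure" and L c :: real and k :: nat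
  assume "prob_space \<mu>" "prob_space \<nu>" "sets \<mu> = sets borel" "sets \<nu> = sets borel" "1 \<le> L"
    "AE x in \<mu>. x \<in> {-L..L}" "AE x in \<nu>. x \<in> {-L..L}" "0 < c" "W1 \<mu> \<nu> = ennreal c"
    and k: "\<lceil>2 * L * 49152 / c\<rceil> \<le> int k"
  moreover have "2 * L * 49152 / c \<le> real k"
    using k by (simp add: ceiling_le_iff)
  ultimately show "c / (2 * 153664 * 3 ^ k) \<le> Mom k \<mu> \<nu>"
    by (intro Mom_lower_bound) auto
qed simp_all

end
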